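(* Let $a(z)$ be a complex function that is differentially transcendental over $\mathcal{C}=\mathbf{C}(z)$. Let $f(z,u_0,u_1,\ldots,u_m,y_1,\ldots,y_n)$ be a rational expression over $\mathcal{L}$, i.e. a rational function in the variables $u_0,\ldots,u_m,y_1,\ldots,y_n$ with coefficients in $\mathcal{L}$. Let $e_1,\ldots,e_m$ be entire functions which are differentially algebraic over $\mathcal{C}$ and satisfy $e_i'\not\equiv 0$ for $1\le i\le m$. If $b$ is a function meromorphic on $\mathbf{C}$ such that $$f(z,b,b\circ e_1,\ldots,b\circ e_m,Db,\ldots,D^nb)\equiv a(z),$$ then $b$ is differentially transcendental over $\mathcal{C}$.
   Context: $D=d/dz$. $\mathcal{C}=\mathbf{C}(z)$ is the differential field of complex rational functions, and $\mathcal{M}$ is the differential field of complex functions meromorphic on $\mathbf{C}$. A function $h\in\mathcal{M}$ (or more generally a complex function) is differentially algebraic over $\mathcal{C}$ if there exist $n\in\mathbf{N}$ and a nonzero polynomial $p\in\mathcal{C}[u_0,\ldots,u_n]$ with $p(h,Dh,\ldots,D^nh)\equiv0$; otherwise it is differentially transcendental over $\mathcal{C}$. $\mathcal{L}=\{h\in\mathcal{M}: h \text{ is differentially algebraic over } \mathcal{C}\}$, which is a differential subfield of $\mathcal{M}$ containing $\mathcal{C}$. *)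

theory Defs
  imports "HOL-Complex_Analysis.Complex_Analysis" "HOL-Computational_Algebra.Polynomial"
begin

text \<open>A polynomial in the
  variables x_0, ..., x_(N-1) is given by its coefficient map c, sending an exponent
  vector (a function nat to nat, vanishing from N on) to a coefficient, here a complex
  function of z.\<close>

definition fpoly :: "nat \<Rightarrow> ((nat \<Rightarrow> nat) \<Rightarrow> (complex \<Rightarrow> complex)) \<Rightarrow> bool" where
  "fpoly N c \<longleftrightarrow> finite {\<alpha>. c \<alpha> \<noteq> (\<lambda>_. 0)} \<and>
     (\<forall>\<alpha>. c \<alpha> \<noteq> (\<lambda>_. 0) \<longrightarrow> (\<forall>i\<ge>N. \<alpha> i = 0))"

definition fpoly_eval ::
  "nat \<Rightarrow> ((nat \<Rightarrow> nat) \<Rightarrow> (complex \<Rightarrow> complex)) \<Rightarrow> (nat \<Rightarrow> complex) \<Rightarrow> complex \<Rightarrow> complex" where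
  "fpoly_eval N c X z = (\<Sum>\<alpha>\<in>{\<alpha>. c \<alpha> \<noteq> (\<lambda>_. 0)}. c \<alpha> z * (\<Prod>i<N. X i ^ \<alpha> i))"

definition rat_fun :: "(complex \<Rightarrow> complex) \<Rightarrow> bool" where
  "rat_fun g \<longleftrightarrow> (\<exists>p q. q \<noteq> 0 \<and> (\<forall>z. g z = poly p z / poly q z))"

text \<open>Differential algebraicity over C(z): some nonzero polynomial
  p in C(z)[u_0,...,u_n] annihilates (h, Dh, ..., D^n h); identities between
  (meromorphic) functions are understood off a discrete set.\<close>
definition diff_alg :: "(complex \<Rightarrow> complex) \<Rightarrow> bool" where
  "diff_alg h \<longleftrightarrow> (\<exists>n c. fpoly (Suc n) c \<and> (\<forall>\<alpha>. rat_fun (c \<alpha>)) \<and>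
      (\<exists>\<alpha>. c \<alpha> \<noteq> (\<lambda>_. 0)) \<and>
      (\<forall>\<^sub>\<approx>z. fpoly_eval (Suc n) c (\<lambda>i. (deriv ^^ i) h z) z = 0))"

definition diff_trans :: "(complex \<Rightarrow> complex) \<Rightarrow> bool" where
  "diff_trans h \<longleftrightarrow> \<not> diff_alg h"

definition L_field :: "(complex \<Rightarrow> complex) set" where
  "L_field = {h. h meromorphic_on UNIV \<and> diff_alg h}"

end

theory Submission
  imports Defs "HOL-Library.Function_Algebras"
begin

text \<open>Suppose b were differentially algebraic.  For a meromorphic differentially algebraic h,
  an annihilating polynomial of minimal order n and minimal degree in the top variable has a
  separant that does not vanish identically, so differentiating it expresses D^(n+1) h
  rationally through h, ..., D^n h: the field C(z)(h, ..., D^n h) is closed under D.  By the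
  chain rule the same holds for b \<circ> e_i, and fields of this kind can be joined.  So a, the
  value of a rational expression in such functions, lies in a field C(z)(G) closed under D with
  G finite, r = |G|.  Then z, a, ..., D^r a are algebraically dependent over C: over a common
  denominator, the (d+1)^(r+2) monomials z^k a^\<alpha>0 ... (D^r a)^\<alpha>r with exponents at most d
  have numerators in a space of polynomials in z and G of dimension O(d^(r+1)).  Hence a would
  be differentially algebraic.\<close>

lemma eventually_cosparse_imp_eventually_nhds:
  assumes "\<forall>\<^sub>\<approx>z::'a::topological_space. P z"
  shows "\<forall>\<^sub>\<approx>z. eventually P (nhds z)"
proof -
  have "\<forall>x. eventually P (at x)" using assms by (simp add: eventually_cosparse_open_eq)
  with assms show ?thesis by (auto elim!: eventually_mono simp: eventually_nhds_conv_at)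
qed

lemma meromorphic_eventually_has_deriv:
  assumes "g meromorphic_on UNIV"
  shows "\<forall>\<^sub>\<approx>z. (g has_field_derivative deriv g z) (at z)"
  using meromorphic_on_imp_analytic_cosparse[OF assms]
  by eventually_elim (simp add: DERIV_deriv_iff_field_differentiable analytic_on_imp_differentiable_at)

lemma meromorphic_zero_or_eventually_nonzero:
  assumes "f meromorphic_on UNIV"
  shows "(\<forall>\<^sub>\<approx>z. f z = 0) \<or> (\<forall>\<^sub>\<approx>z. f z \<noteq> 0)"
  using meromorphic_imp_constant_or_avoid[OF assms] by auto

lemma rat_fun_cmult: "rat_fun f \<Longrightarrow> rat_fun (\<lambda>z. k * f z)"
  unfolding rat_fun_def by (metis poly_smult times_divide_eq_right)

lemma rat_fun_eventually_nonzero: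
  assumes "rat_fun f" "f \<noteq> (\<lambda>_. 0)"
  shows "\<forall>\<^sub>\<approx>z. f z \<noteq> 0"
proof -
  obtain p q where pq: "q \<noteq> 0" "\<And>z. f z = poly p z / poly q z"
    using assms(1) unfolding rat_fun_def by blast
  have "p \<noteq> 0" using assms(2) pq by auto
  hence "finite ({z. poly p z = 0} \<union> {z. poly q z = 0})" using pq(1) by (simp add: poly_roots_finite)
  hence "\<forall>\<^sub>\<approx>z. z \<notin> {z. poly p z = 0} \<union> {z. poly q z = 0}"
    by (intro eventually_not_in_cosparse finite_imp_sparse)
  thus ?thesis by eventually_elim (simp add: pq)
qed

section \<open>The field generated by a set of meromorphic functions\<close>

text \<open>gen_ring G is the ring C[z][G] and gen_field G the field C(z)(G), whose elements are
  only determined off a discrete set.\<close>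

inductive_set gen_ring :: "(complex \<Rightarrow> complex) set \<Rightarrow> (complex \<Rightarrow> complex) set" for G where
  gen_ring_const: "(\<lambda>z. c) \<in> gen_ring G"
| gen_ring_id: "(\<lambda>z. z) \<in> gen_ring G"
| gen_ring_gen: "g \<in> G \<Longrightarrow> g \<in> gen_ring G"
| gen_ring_add: "f \<in> gen_ring G \<Longrightarrow> h \<in> gen_ring G \<Longrightarrow> (\<lambda>z. f z + h z) \<in> gen_ring G"
| gen_ring_mult: "f \<in> gen_ring G \<Longrightarrow> h \<in> gen_ring G \<Longrightarrow> (\<lambda>z. f z * h z) \<in> gen_ring G"

lemma gen_ring_mono: "f \<in> gen_ring G \<Longrightarrow> G \<subseteq> G' \<Longrightarrow> f \<in> gen_ring G'"
  by (induction rule: gen_ring.induct) (auto intro: gen_ring.intros)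

lemma gen_ring_poly: "(\<lambda>z. poly p z) \<in> gen_ring G"
  by (induction p) (auto intro: gen_ring.intros gen_ring_add[OF gen_ring_const gen_ring_mult[OF gen_ring_id], simplified])

lemma gen_ring_meromorphic:
  "f \<in> gen_ring G \<Longrightarrow> \<forall>g\<in>G. g meromorphic_on UNIV \<Longrightarrow> f meromorphic_on UNIV"
  by (induction rule: gen_ring.induct) (auto intro!: meromorphic_intros)

lemma rat_fun_meromorphic:
  assumes "rat_fun f"
  shows "f meromorphic_on UNIV"
proof -
  obtain p q where "\<And>z. f z = poly p z / poly q z" using assms unfolding rat_fun_def by blast
  hence "f = (\<lambda>z. poly p z / poly q z)" by auto
  thus ?thesis by (auto intro!: meromorphic_intros gen_ring_meromorphic[OF gen_ring_poly, where G="{}"])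
qed

definition gen_field :: "(complex \<Rightarrow> complex) set \<Rightarrow> (complex \<Rightarrow> complex) set" where
  "gen_field G = {x. \<exists>A B. A \<in> gen_ring G \<and> B \<in> gen_ring G \<and> (\<forall>\<^sub>\<approx>z. B z \<noteq> 0) \<and>
     (\<forall>\<^sub>\<approx>z. x z = A z / B z)}"

lemma gen_fieldI:
  "A \<in> gen_ring G \<Longrightarrow> B \<in> gen_ring G \<Longrightarrow> (\<forall>\<^sub>\<approx>z. B z \<noteq> 0) \<Longrightarrow> (\<forall>\<^sub>\<approx>z. x z = A z / B z) \<Longrightarrow>
    x \<in> gen_field G"
  unfolding gen_field_def by blast

lemma gen_fieldE:
  assumes "x \<in> gen_field G"
  obtains A B where "A \<in> gen_ring G" "B \<in> gen_ring G" "\<forall>\<^sub>\<approx>z. B z \<noteq> 0" "\<forall>\<^sub>\<approx>z. x z = A z / B z"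
  using assms unfolding gen_field_def by blast

lemma gen_field_of_gen_ring: "f \<in> gen_ring G \<Longrightarrow> f \<in> gen_field G"
  by (rule gen_fieldI[of f G "\<lambda>_. 1"]) (auto intro: gen_ring_const)

lemma gen_field_const: "(\<lambda>z. c) \<in> gen_field G"
  by (intro gen_field_of_gen_ring gen_ring_const)

lemma gen_field_gen: "g \<in> G \<Longrightarrow> g \<in> gen_field G"
  by (intro gen_field_of_gen_ring gen_ring_gen)

lemma gen_field_cong:
  assumes x: "x \<in> gen_field G" and xy: "\<forall>\<^sub>\<approx>z. x z = y z"
  shows "y \<in> gen_field G"
proof -
  obtain A B where AB: "A \<in> gen_ring G" "B \<in> gen_ring G" "\<forall>\<^sub>\<approx>z. B z \<noteq> 0" "\<forall>\<^sub>\<approx>z. x z = A z / B z"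
    using x by (rule gen_fieldE)
  have "\<forall>\<^sub>\<approx>z. y z = A z / B z" using AB(4) xy by eventually_elim auto
  thus ?thesis using AB by (intro gen_fieldI) auto
qed

lemma gen_field_mono: "x \<in> gen_field G \<Longrightarrow> G \<subseteq> G' \<Longrightarrow> x \<in> gen_field G'"
  unfolding gen_field_def using gen_ring_mono by blast

lemma gen_field_add:
  assumes x: "x \<in> gen_field G" and y: "y \<in> gen_field G"
  shows "(\<lambda>z. x z + y z) \<in> gen_field G"
proof -
  obtain A B where AB: "A \<in> gen_ring G" "B \<in> gen_ring G" "\<forall>\<^sub>\<approx>z. B z \<noteq> 0" "\<forall>\<^sub>\<approx>z. x z = A z / B z"
    using x by (rule gen_fieldE)
  obtain C D where CD: "C \<in> gen_ring G" "D \<in> gen_ring G" "\<forall>\<^sub>\<approx>z. D z \<noteq> 0" "\<forall>\<^sub>\<approx>z. y z = C z / D z"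
    using y by (rule gen_fieldE)
  show ?thesis
  proof (rule gen_fieldI[of "\<lambda>z. A z * D z + C z * B z" _ "\<lambda>z. B z * D z"])
    show "\<forall>\<^sub>\<approx>z. B z * D z \<noteq> 0" using AB(3) CD(3) by eventually_elim auto
    show "\<forall>\<^sub>\<approx>z. x z + y z = (A z * D z + C z * B z) / (B z * D z)"
      using AB(3,4) CD(3,4) by eventually_elim (simp add: field_simps)
  qed (intro gen_ring_add gen_ring_mult AB CD)+
qed

lemma gen_field_mult:
  assumes x: "x \<in> gen_field G" and y: "y \<in> gen_field G"
  shows "(\<lambda>z. x z * y z) \<in> gen_field G"
proof -
  obtain A B where AB: "A \<in> gen_ring G" "B \<in> gen_ring G" "\<forall>\<^sub>\<approx>z. B z \<noteq> 0" "\<forall>\<^sub>\<approx>z. x z = A z / B z"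
    using x by (rule gen_fieldE)
  obtain C D where CD: "C \<in> gen_ring G" "D \<in> gen_ring G" "\<forall>\<^sub>\<approx>z. D z \<noteq> 0" "\<forall>\<^sub>\<approx>z. y z = C z / D z"
    using y by (rule gen_fieldE)
  show ?thesis
  proof (rule gen_fieldI[of "\<lambda>z. A z * C z" _ "\<lambda>z. B z * D z"])
    show "\<forall>\<^sub>\<approx>z. B z * D z \<noteq> 0" using AB(3) CD(3) by eventually_elim auto
    show "\<forall>\<^sub>\<approx>z. x z * y z = (A z * C z) / (B z * D z)"
      using AB(3,4) CD(3,4) by eventually_elim simp
  qed (intro gen_ring_mult AB CD)+
qed

lemma gen_field_uminus: "x \<in> gen_field G \<Longrightarrow> (\<lambda>z. - x z) \<in> gen_field G"
  using gen_field_mult[OF gen_field_const[of "-1"]] by simp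

lemma gen_field_diff: "x \<in> gen_field G \<Longrightarrow> y \<in> gen_field G \<Longrightarrow> (\<lambda>z. x z - y z) \<in> gen_field G"
  using gen_field_add[OF _ gen_field_uminus[of y]] by simp

lemma gen_field_sum:
  "(\<And>i. i \<in> I \<Longrightarrow> f i \<in> gen_field G) \<Longrightarrow> (\<lambda>z. \<Sum>i\<in>I. f i z) \<in> gen_field G"
  by (induction I rule: infinite_finite_induct)
    (auto intro: gen_field_const gen_field_add[of "f _" G "\<lambda>z. \<Sum>i\<in>_. f i z", simplified])

lemma gen_field_prod:
  "(\<And>i. i \<in> I \<Longrightarrow> f i \<in> gen_field G) \<Longrightarrow> (\<lambda>z. \<Prod>i\<in>I. f i z) \<in> gen_field G"
  by (induction I rule: infinite_finite_induct)
    (auto intro: gen_field_const gen_field_mult[of "f _" G "\<lambda>z. \<Prod>i\<in>_. f i z", simplified])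

lemma gen_field_power: "f \<in> gen_field G \<Longrightarrow> (\<lambda>z. f z ^ n) \<in> gen_field G"
  using gen_field_prod[of "{..<n}" "\<lambda>_. f" G] by simp

lemma gen_field_inverse:
  assumes x: "x \<in> gen_field G" and G: "\<forall>g\<in>G. g meromorphic_on UNIV"
  shows "(\<lambda>z. inverse (x z)) \<in> gen_field G"
proof -
  obtain A B where AB: "A \<in> gen_ring G" "B \<in> gen_ring G" "\<forall>\<^sub>\<approx>z. B z \<noteq> 0" "\<forall>\<^sub>\<approx>z. x z = A z / B z"
    using x by (rule gen_fieldE)
  have "A meromorphic_on UNIV" using AB(1) G by (rule gen_ring_meromorphic)
  then consider "\<forall>\<^sub>\<approx>z. A z = 0" | "\<forall>\<^sub>\<approx>z. A z \<noteq> 0"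
    using meromorphic_zero_or_eventually_nonzero by blast
  then show ?thesis
  proof cases
    case 1
    show ?thesis
      by (rule gen_field_cong[OF gen_field_const[of 0]]) (use 1 AB(4) in eventually_elim, auto)
  next
    case 2
    show ?thesis
      by (rule gen_fieldI[OF AB(2) AB(1) 2]) (use 2 AB(3,4) in eventually_elim, auto)
  qed
qed

lemma gen_field_divide:
  "x \<in> gen_field G \<Longrightarrow> y \<in> gen_field G \<Longrightarrow> \<forall>g\<in>G. g meromorphic_on UNIV \<Longrightarrow>
    (\<lambda>z. x z / y z) \<in> gen_field G"
  using gen_field_mult[OF _ gen_field_inverse[of y]] by (simp add: divide_inverse)

lemma gen_field_rat_fun:
  assumes "rat_fun f"
  shows "f \<in> gen_field G"
proof -
  obtain p q where pq: "q \<noteq> 0" "\<And>z. f z = poly p z / poly q z"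
    using assms unfolding rat_fun_def by blast
  have "\<forall>\<^sub>\<approx>z. z \<notin> {z. poly q z = 0}"
    using pq(1) by (intro eventually_not_in_cosparse finite_imp_sparse poly_roots_finite)
  thus ?thesis by (intro gen_fieldI[OF gen_ring_poly[of p] gen_ring_poly[of q]]) (use pq in auto)
qed

lemma fpoly_eval_gen_field:
  assumes "\<forall>\<alpha>. c \<alpha> \<noteq> (\<lambda>_. 0) \<longrightarrow> c \<alpha> \<in> gen_field G" "\<forall>i<N. X i \<in> gen_field G"
  shows "(\<lambda>z. fpoly_eval N c (\<lambda>i. X i z) z) \<in> gen_field G"
  unfolding fpoly_eval_def using assms
  by (intro gen_field_sum gen_field_mult gen_field_prod gen_field_power) auto

lemma fpoly_eval_meromorphic:
  assumes "\<forall>\<alpha>. rat_fun (c \<alpha>)" "\<forall>i<N. X i meromorphic_on UNIV"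
  shows "(\<lambda>z. fpoly_eval N c (\<lambda>i. X i z) z) meromorphic_on UNIV"
  unfolding fpoly_eval_def using assms rat_fun_meromorphic by (intro meromorphic_intros) auto

section \<open>Finitely generated differential fields\<close>

lemma gen_ring_has_deriv:
  assumes G: "\<forall>g\<in>G. g meromorphic_on UNIV" "\<forall>g\<in>G. deriv g \<in> gen_field G"
    and f: "f \<in> gen_ring G"
  shows "\<exists>y\<in>gen_field G. \<forall>\<^sub>\<approx>z. (f has_field_derivative y z) (at z)"
  using f
proof (induction rule: gen_ring.induct)
  case (gen_ring_const c)
  show ?case by (rule bexI[OF _ gen_field_const[of 0]]) auto
next
  case gen_ring_id
  show ?case by (rule bexI[OF _ gen_field_const[of 1]]) auto
next
  case (gen_ring_gen g)
  thus ?case using G meromorphic_eventually_has_deriv by blast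
next
  case (gen_ring_add f h)
  then obtain y1 y2 where y: "y1 \<in> gen_field G" "y2 \<in> gen_field G"
    "\<forall>\<^sub>\<approx>z. (f has_field_derivative y1 z) (at z)" "\<forall>\<^sub>\<approx>z. (h has_field_derivative y2 z) (at z)"
    by blast
  have "\<forall>\<^sub>\<approx>z. ((\<lambda>z. f z + h z) has_field_derivative y1 z + y2 z) (at z)"
    using y(3,4) by eventually_elim (auto intro!: derivative_eq_intros)
  thus ?case using gen_field_add[OF y(1,2)] by (rule bexI)
next
  case (gen_ring_mult f h)
  then obtain y1 y2 where y: "y1 \<in> gen_field G" "y2 \<in> gen_field G"
    "\<forall>\<^sub>\<approx>z. (f has_field_derivative y1 z) (at z)" "\<forall>\<^sub>\<approx>z. (h has_field_derivative y2 z) (at z)"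
    by blast
  have fh: "f \<in> gen_field G" "h \<in> gen_field G"
    using gen_ring_mult.hyps by (auto intro: gen_field_of_gen_ring)
  have "\<forall>\<^sub>\<approx>z. ((\<lambda>z. f z * h z) has_field_derivative y1 z * h z + f z * y2 z) (at z)"
    using y(3,4) by eventually_elim (auto intro!: derivative_eq_intros)
  thus ?case using gen_field_add[OF gen_field_mult[OF y(1) fh(2)] gen_field_mult[OF fh(1) y(2)]]
    by (rule bexI)
qed

lemma gen_field_has_deriv:
  assumes G: "\<forall>g\<in>G. g meromorphic_on UNIV" "\<forall>g\<in>G. deriv g \<in> gen_field G"
    and x: "x \<in> gen_field G"
  shows "\<exists>y\<in>gen_field G. \<forall>\<^sub>\<approx>z. (x has_field_derivative y z) (at z)"
proof -
  obtain A B where AB: "A \<in> gen_ring G" "B \<in> gen_ring G" "\<forall>\<^sub>\<approx>z. B z \<noteq> 0" "\<forall>\<^sub>\<approx>z. x z = A z / B z"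
    using x by (rule gen_fieldE)
  obtain a where a: "a \<in> gen_field G" "\<forall>\<^sub>\<approx>z. (A has_field_derivative a z) (at z)"
    using gen_ring_has_deriv[OF G AB(1)] by blast
  obtain b where b: "b \<in> gen_field G" "\<forall>\<^sub>\<approx>z. (B has_field_derivative b z) (at z)"
    using gen_ring_has_deriv[OF G AB(2)] by blast
  have "\<forall>\<^sub>\<approx>z. (x has_field_derivative (a z * B z - A z * b z) / (B z)^2) (at z)"
    using eventually_cosparse_imp_eventually_nhds[OF AB(4)] a(2) b(2) AB(3)
  proof eventually_elim
    case (elim z)
    have "((\<lambda>w. A w / B w) has_field_derivative (a z * B z - A z * b z) / (B z)^2) (at z)"
      using elim by (auto intro!: derivative_eq_intros simp: power2_eq_square)
    thus ?case by (subst DERIV_cong_ev[OF refl elim(1) refl])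
  qed
  moreover have "(\<lambda>z. (a z * B z - A z * b z) / (B z)^2) \<in> gen_field G"
    using AB(1,2) by (intro gen_field_divide gen_field_diff gen_field_mult gen_field_power a b G
      gen_field_of_gen_ring)
  ultimately show ?thesis by (rule bexI)
qed

lemma gen_field_deriv:
  assumes "\<forall>g\<in>G. g meromorphic_on UNIV" "\<forall>g\<in>G. deriv g \<in> gen_field G" "x \<in> gen_field G"
  shows "deriv x \<in> gen_field G"
proof -
  obtain y where y: "y \<in> gen_field G" "\<forall>\<^sub>\<approx>z. (x has_field_derivative y z) (at z)"
    using gen_field_has_deriv[OF assms] by blast
  show ?thesis
    by (rule gen_field_cong[OF y(1)]) (use y(2) in \<open>eventually_elim, simp add: DERIV_imp_deriv\<close>)
qed

lemma gen_field_higher_deriv: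
  assumes "\<forall>g\<in>G. g meromorphic_on UNIV" "\<forall>g\<in>G. deriv g \<in> gen_field G" "x \<in> gen_field G"
  shows "(deriv ^^ j) x \<in> gen_field G"
  by (induction j) (auto intro: gen_field_deriv[OF assms(1,2)] assms(3))

definition diff_gens :: "(complex \<Rightarrow> complex) set \<Rightarrow> bool" where
  "diff_gens G \<longleftrightarrow> finite G \<and> (\<forall>g\<in>G. g meromorphic_on UNIV) \<and> (\<forall>g\<in>G. deriv g \<in> gen_field G)"

lemma diff_gens_Un: "diff_gens G1 \<Longrightarrow> diff_gens G2 \<Longrightarrow> diff_gens (G1 \<union> G2)"
  unfolding diff_gens_def by (auto intro: gen_field_mono)

lemma diff_gens_common:
  assumes "finite F" "\<forall>f\<in>F. \<exists>G. diff_gens G \<and> f \<in> gen_field G"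
  shows "\<exists>G. diff_gens G \<and> F \<subseteq> gen_field G"
  using assms
proof (induction F rule: finite_induct)
  case empty
  have "diff_gens {}" by (simp add: diff_gens_def)
  thus ?case by blast
next
  case (insert f F)
  then obtain G1 G2 where "diff_gens G1" "F \<subseteq> gen_field G1" "diff_gens G2" "f \<in> gen_field G2"
    by auto
  hence "diff_gens (G1 \<union> G2)" "insert f F \<subseteq> gen_field (G1 \<union> G2)"
    by (auto intro: diff_gens_Un gen_field_mono)
  thus ?case by blast
qed

section \<open>Composition with a nonconstant entire function\<close>

lemma nonconstant_entire_eventually_neq:
  assumes e: "e holomorphic_on UNIV" "deriv e \<noteq> (\<lambda>_. 0)"
  shows "\<forall>\<^sub>\<approx>z. e z \<noteq> c"
proof -
  have "e nicely_meromorphic_on UNIV"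
    using e(1) by (intro analytic_on_imp_nicely_meromorphic_on) (simp add: analytic_on_open)
  from nicely_meromorphic_imp_constant_or_avoid[OF this, of c]
  have "(\<forall>x. e x = c) \<or> (\<forall>\<^sub>\<approx>x. e x \<noteq> c)" by auto
  moreover have "\<not> (\<forall>x. e x = c)"
  proof
    assume "\<forall>x. e x = c"
    hence "e = (\<lambda>_. c)" by auto
    hence "deriv e = (\<lambda>_. 0)" by simp
    thus False using e(2) by simp
  qed
  ultimately show ?thesis by simp
qed

lemma eventually_cosparse_compose_entire:
  assumes e: "e holomorphic_on UNIV" "deriv e \<noteq> (\<lambda>_. 0)" and P: "\<forall>\<^sub>\<approx>z. P z"
  shows "\<forall>\<^sub>\<approx>z. P (e z)"
proof -
  have "eventually (\<lambda>z. P (e z)) (at x)" for x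
  proof -
    have "isCont e x"
      using e(1) analytic_at_imp_isCont analytic_on_analytic_at analytic_on_open by blast
    moreover have "eventually (\<lambda>z. e z \<noteq> e x) (at x)"
      using nonconstant_entire_eventually_neq[OF e] by (rule eventually_cosparse_imp_eventually_at) auto
    ultimately have "filterlim e (at (e x)) (at x)"
      by (intro filterlim_atI) (simp_all add: isCont_def)
    moreover have "eventually P (at (e x))" using P by (simp add: eventually_cosparse_open_eq)
    ultimately show ?thesis by (simp add: eventually_compose_filterlim)
  qed
  thus ?thesis by (simp add: eventually_cosparse_open_eq)
qed

lemma eventually_deriv_compose_entire:
  assumes e: "e holomorphic_on UNIV" "deriv e \<noteq> (\<lambda>_. 0)" and g: "g meromorphic_on UNIV"
  shows "\<forall>\<^sub>\<approx>z. deriv (\<lambda>z. g (e z)) z = deriv g (e z) * deriv e z"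
  using eventually_cosparse_compose_entire[OF e meromorphic_eventually_has_deriv[OF g]]
proof eventually_elim
  case (elim z)
  have "(e has_field_derivative deriv e z) (at z)"
    using e(1) by (simp add: DERIV_deriv_iff_field_differentiable holomorphic_on_imp_differentiable_at)
  with elim have "((\<lambda>z. g (e z)) has_field_derivative deriv g (e z) * deriv e z) (at z)"
    by (rule DERIV_chain2)
  thus ?case by (rule DERIV_imp_deriv)
qed

definition compose_gens :: "(complex \<Rightarrow> complex) set \<Rightarrow> (complex \<Rightarrow> complex) \<Rightarrow> (complex \<Rightarrow> complex) set"
  where "compose_gens G e = insert e ((\<lambda>g z. g (e z)) ` G)"

lemma gen_ring_compose: "f \<in> gen_ring G \<Longrightarrow> (\<lambda>z. f (e z)) \<in> gen_ring (compose_gens G e)"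
  by (induction rule: gen_ring.induct)
    (auto intro: gen_ring.intros simp: compose_gens_def)

lemma gen_field_compose:
  assumes e: "e holomorphic_on UNIV" "deriv e \<noteq> (\<lambda>_. 0)" and x: "x \<in> gen_field G"
  shows "(\<lambda>z. x (e z)) \<in> gen_field (compose_gens G e)"
proof -
  obtain A B where AB: "A \<in> gen_ring G" "B \<in> gen_ring G" "\<forall>\<^sub>\<approx>z. B z \<noteq> 0" "\<forall>\<^sub>\<approx>z. x z = A z / B z"
    using x by (rule gen_fieldE)
  show ?thesis
    by (rule gen_fieldI[OF gen_ring_compose[OF AB(1)] gen_ring_compose[OF AB(2)]])
      (use eventually_cosparse_compose_entire[OF e] AB(3,4) in auto)
qed

lemma diff_gens_compose:
  assumes G: "diff_gens G" and Ge: "diff_gens Ge" "e \<in> gen_field Ge"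
    and e: "e holomorphic_on UNIV" "deriv e \<noteq> (\<lambda>_. 0)"
  shows "diff_gens (compose_gens G e \<union> Ge)"
proof -
  let ?G' = "compose_gens G e \<union> Ge"
  have G_mero: "\<forall>g\<in>G. g meromorphic_on UNIV" and G_deriv: "\<forall>g\<in>G. deriv g \<in> gen_field G"
    using G by (auto simp: diff_gens_def)
  have e_mero: "e meromorphic_on UNIV"
    using e(1) by (simp add: analytic_on_open analytic_on_imp_meromorphic_on)
  have "deriv e \<in> gen_field Ge"
    using Ge by (intro gen_field_deriv) (auto simp: diff_gens_def)
  hence de: "deriv e \<in> gen_field ?G'" by (rule gen_field_mono) auto
  have "\<forall>g\<in>compose_gens G e. g meromorphic_on UNIV"
    using G_mero e_mero e(1)
    by (auto simp: compose_gens_def analytic_on_open intro: meromorphic_on_compose[of _ UNIV e UNIV, simplified])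
  moreover have "deriv (\<lambda>z. g (e z)) \<in> gen_field ?G'" if g: "g \<in> G" for g
  proof -
    have "(\<lambda>z. deriv g (e z)) \<in> gen_field (compose_gens G e)"
      using G_deriv g by (intro gen_field_compose e) auto
    hence "(\<lambda>z. deriv g (e z) * deriv e z) \<in> gen_field ?G'"
      by (intro gen_field_mult de) (auto elim: gen_field_mono)
    moreover have "\<forall>\<^sub>\<approx>z. deriv g (e z) * deriv e z = deriv (\<lambda>z. g (e z)) z"
      using eventually_deriv_compose_entire[OF e, of g] G_mero g by (simp add: eq_commute)
    ultimately show ?thesis by (rule gen_field_cong)
  qed
  ultimately show ?thesis
    using G Ge de by (auto simp: diff_gens_def compose_gens_def intro: gen_field_mono)
qed

section \<open>Differentially algebraic meromorphic functions\<close>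

text \<open>partial_coeffs n c is the coefficient map of the partial derivative with respect to x_n;
  evaluated along h, ..., D^n h it gives the separant of the annihilator c.\<close>

definition partial_coeffs ::
  "nat \<Rightarrow> ((nat \<Rightarrow> nat) \<Rightarrow> complex \<Rightarrow> complex) \<Rightarrow> (nat \<Rightarrow> nat) \<Rightarrow> complex \<Rightarrow> complex" where
  "partial_coeffs n c = (\<lambda>\<beta> z. of_nat (\<beta> n + 1) * c (\<beta>(n := \<beta> n + 1)) z)"

definition var_degree_le :: "nat \<Rightarrow> ((nat \<Rightarrow> nat) \<Rightarrow> complex \<Rightarrow> complex) \<Rightarrow> nat \<Rightarrow> bool" where
  "var_degree_le n c d \<longleftrightarrow> (\<forall>\<alpha>. c \<alpha> \<noteq> (\<lambda>_. 0) \<longrightarrow> \<alpha> n \<le> d)"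

lemma partial_coeffs_nonzero_iff:
  "partial_coeffs n c \<beta> \<noteq> (\<lambda>_. 0) \<longleftrightarrow> c (\<beta>(n := \<beta> n + 1)) \<noteq> (\<lambda>_. 0)"
  unfolding partial_coeffs_def fun_eq_iff by (simp del: of_nat_Suc)

lemma partial_coeffs_nonzero:
  assumes "c \<alpha> \<noteq> (\<lambda>_. 0)" "\<alpha> n \<noteq> 0"
  shows "partial_coeffs n c (\<alpha>(n := \<alpha> n - 1)) \<noteq> (\<lambda>_. 0)"
proof -
  have "(\<alpha>(n := \<alpha> n - 1))(n := (\<alpha>(n := \<alpha> n - 1)) n + 1) = \<alpha>" using assms(2) by auto
  thus ?thesis using assms(1) by (simp add: partial_coeffs_nonzero_iff)
qed

lemma fpoly_partial_coeffs:
  assumes "fpoly N c" "n < N"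
  shows "fpoly N (partial_coeffs n c)"
proof -
  have "{\<beta>. partial_coeffs n c \<beta> \<noteq> (\<lambda>_. 0)} \<subseteq> (\<lambda>\<alpha>. \<alpha>(n := \<alpha> n - 1)) ` {\<alpha>. c \<alpha> \<noteq> (\<lambda>_. 0)}"
  proof
    fix \<beta> assume "\<beta> \<in> {\<beta>. partial_coeffs n c \<beta> \<noteq> (\<lambda>_. 0)}"
    hence "c (\<beta>(n := \<beta> n + 1)) \<noteq> (\<lambda>_. 0)" by (simp add: partial_coeffs_nonzero_iff)
    moreover have "\<beta> = (\<lambda>\<alpha>. \<alpha>(n := \<alpha> n - 1)) (\<beta>(n := \<beta> n + 1))" by auto
    ultimately show "\<beta> \<in> (\<lambda>\<alpha>. \<alpha>(n := \<alpha> n - 1)) ` {\<alpha>. c \<alpha> \<noteq> (\<lambda>_. 0)}" by blast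
  qed
  hence "finite {\<beta>. partial_coeffs n c \<beta> \<noteq> (\<lambda>_. 0)}"
    using assms(1) finite_surj by (auto simp: fpoly_def)
  moreover have "\<beta> i = 0" if "partial_coeffs n c \<beta> \<noteq> (\<lambda>_. 0)" "i \<ge> N" for \<beta> i
    using assms that by (auto simp: fpoly_def partial_coeffs_nonzero_iff split: if_splits)
  ultimately show ?thesis by (simp add: fpoly_def)
qed

lemma rat_fun_partial_coeffs: "\<forall>\<alpha>. rat_fun (c \<alpha>) \<Longrightarrow> rat_fun (partial_coeffs n c \<beta>)"
  unfolding partial_coeffs_def by (auto intro: rat_fun_cmult)

lemma var_degree_le_partial_coeffs:
  assumes "var_degree_le n c (Suc d)"
  shows "var_degree_le n (partial_coeffs n c) d"
  unfolding var_degree_le_def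
proof (intro allI impI)
  fix \<beta> assume "partial_coeffs n c \<beta> \<noteq> (\<lambda>_. 0)"
  hence "c (\<beta>(n := \<beta> n + 1)) \<noteq> (\<lambda>_. 0)" by (simp add: partial_coeffs_nonzero_iff)
  hence "(\<beta>(n := \<beta> n + 1)) n \<le> Suc d" using assms unfolding var_degree_le_def by blast
  thus "\<beta> n \<le> d" by simp
qed

lemma fpoly_var_degree_le: "fpoly N c \<Longrightarrow> \<exists>d. var_degree_le n c d"
  unfolding fpoly_def var_degree_le_def
  by (rule exI[of _ "Max ((\<lambda>\<alpha>. \<alpha> n) ` {\<alpha>. c \<alpha> \<noteq> (\<lambda>_. 0)})"]) auto

lemma fpoly_eval_partial_coeffs:
  assumes "fpoly N c" "n < N"
  shows "fpoly_eval N (partial_coeffs n c) X z =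
    (\<Sum>\<alpha>\<in>{\<alpha>. c \<alpha> \<noteq> (\<lambda>_. 0)}. c \<alpha> z * (of_nat (\<alpha> n) * X n ^ (\<alpha> n - 1) * (\<Prod>j\<in>{..<N}-{n}. X j ^ \<alpha> j)))"
    (is "_ = (\<Sum>\<alpha>\<in>?S. ?h \<alpha>)")
proof -
  let ?T = "{\<alpha>. c \<alpha> \<noteq> (\<lambda>_. 0) \<and> \<alpha> n \<noteq> 0}"
  have "(\<Sum>\<alpha>\<in>?S. ?h \<alpha>) = (\<Sum>\<alpha>\<in>?T. ?h \<alpha>)"
    by (rule sum.mono_neutral_right) (use assms(1) in \<open>auto simp: fpoly_def\<close>)
  also have "\<dots> = fpoly_eval N (partial_coeffs n c) X z"
    unfolding fpoly_eval_def
  proof (rule sum.reindex_bij_witness[of _ "\<lambda>\<beta>. \<beta>(n := \<beta> n + 1)" "\<lambda>\<alpha>. \<alpha>(n := \<alpha> n - 1)"])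
    fix \<alpha> assume \<alpha>: "\<alpha> \<in> ?T"
    define \<beta> where "\<beta> = \<alpha>(n := \<alpha> n - 1)"
    show "\<beta>(n := \<beta> n + 1) = \<alpha>" "\<beta> \<in> {\<beta>. partial_coeffs n c \<beta> \<noteq> (\<lambda>_. 0)}"
      using \<alpha> partial_coeffs_nonzero[of c \<alpha> n] by (auto simp: \<beta>_def)
    have "(\<Prod>j<N. X j ^ \<beta> j) = X n ^ \<beta> n * (\<Prod>j\<in>{..<N}-{n}. X j ^ \<alpha> j)"
      using assms(2) by (subst prod.remove[of _ n]) (auto simp: \<beta>_def intro!: prod.cong)
    moreover have "\<beta>(n := \<beta> n + 1) = \<alpha>" "\<beta> n + 1 = \<alpha> n" "\<beta> n = \<alpha> n - 1"
      using \<alpha> by (auto simp: \<beta>_def)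
    ultimately show "partial_coeffs n c \<beta> z * (\<Prod>i<N. X i ^ \<beta> i) = ?h \<alpha>"
      unfolding partial_coeffs_def by (simp add: algebra_simps)
  next
    fix \<beta> assume "\<beta> \<in> {\<beta>. partial_coeffs n c \<beta> \<noteq> (\<lambda>_. 0)}"
    thus "(\<beta>(n := \<beta> n + 1))(n := (\<beta>(n := \<beta> n + 1)) n - 1) = \<beta>" "\<beta>(n := \<beta> n + 1) \<in> ?T"
      by (auto simp: partial_coeffs_nonzero_iff)
  qed
  finally show ?thesis by simp
qed

text \<open>Only the top variable x_n produces Y (n + 1), and its coefficient is the separant.\<close>

lemma fpoly_eval_has_field_derivative:
  fixes Y :: "nat \<Rightarrow> complex \<Rightarrow> complex"
  assumes fp: "fpoly (Suc n) c"
    and dc: "\<And>\<alpha>. c \<alpha> \<noteq> (\<lambda>_. 0) \<Longrightarrow> (c \<alpha> has_field_derivative dc \<alpha>) (at z)"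
    and dY: "\<And>i. i \<le> n \<Longrightarrow> (Y i has_field_derivative Y (Suc i) z) (at z)"
  shows "((\<lambda>w. fpoly_eval (Suc n) c (\<lambda>i. Y i w) w) has_field_derivative
     (\<Sum>\<alpha>\<in>{\<alpha>. c \<alpha> \<noteq> (\<lambda>_. 0)}. dc \<alpha> * (\<Prod>i<Suc n. Y i z ^ \<alpha> i) + c \<alpha> z *
        (\<Sum>i<n. of_nat (\<alpha> i) * (Y (Suc i) z * Y i z ^ (\<alpha> i - Suc 0)) * (\<Prod>j\<in>{..<Suc n}-{i}. Y j z ^ \<alpha> j)))
     + fpoly_eval (Suc n) (partial_coeffs n c) (\<lambda>i. Y i z) z * Y (Suc n) z) (at z)"
proof -
  let ?S = "{\<alpha>. c \<alpha> \<noteq> (\<lambda>_. 0)}"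
  let ?dP = "\<lambda>\<alpha> i. of_nat (\<alpha> i) * (Y (Suc i) z * Y i z ^ (\<alpha> i - Suc 0)) * (\<Prod>j\<in>{..<Suc n}-{i}. Y j z ^ \<alpha> j)"
  have dP: "((\<lambda>w. \<Prod>i<Suc n. Y i w ^ \<alpha> i) has_field_derivative (\<Sum>i<Suc n. ?dP \<alpha> i)) (at z)" for \<alpha>
    by (rule has_field_derivative_prod, rule DERIV_power, rule dY) auto
  have "((\<lambda>w. fpoly_eval (Suc n) c (\<lambda>i. Y i w) w) has_field_derivative
     (\<Sum>\<alpha>\<in>?S. dc \<alpha> * (\<Prod>i<Suc n. Y i z ^ \<alpha> i) + c \<alpha> z * (\<Sum>i<Suc n. ?dP \<alpha> i))) (at z)"
    unfolding fpoly_eval_def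
    by (intro DERIV_sum DERIV_cong[OF DERIV_mult[OF dc dP]]) (auto simp: algebra_simps)
  also have "(\<Sum>\<alpha>\<in>?S. dc \<alpha> * (\<Prod>i<Suc n. Y i z ^ \<alpha> i) + c \<alpha> z * (\<Sum>i<Suc n. ?dP \<alpha> i)) =
      (\<Sum>\<alpha>\<in>?S. dc \<alpha> * (\<Prod>i<Suc n. Y i z ^ \<alpha> i) + c \<alpha> z * (\<Sum>i<n. ?dP \<alpha> i)) +
      (\<Sum>\<alpha>\<in>?S. c \<alpha> z * (of_nat (\<alpha> n) * Y n z ^ (\<alpha> n - 1) * (\<Prod>j\<in>{..<Suc n}-{n}. Y j z ^ \<alpha> j))) * Y (Suc n) z"
    by (simp add: sum.distrib sum_distrib_right sum_distrib_left algebra_simps)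
  finally show ?thesis by (simp only: fpoly_eval_partial_coeffs[OF fp lessI])
qed

definition annihilates :: "(complex \<Rightarrow> complex) \<Rightarrow> nat \<Rightarrow> ((nat \<Rightarrow> nat) \<Rightarrow> complex \<Rightarrow> complex) \<Rightarrow> bool"
  where "annihilates h n c \<longleftrightarrow> fpoly (Suc n) c \<and> (\<forall>\<alpha>. rat_fun (c \<alpha>)) \<and> (\<exists>\<alpha>. c \<alpha> \<noteq> (\<lambda>_. 0)) \<and>
      (\<forall>\<^sub>\<approx>z. fpoly_eval (Suc n) c (\<lambda>i. (deriv ^^ i) h z) z = 0)"

lemma annihilates_var_degree_0:
  assumes ann: "annihilates h n c" and deg: "var_degree_le n c 0"
  shows "n \<noteq> 0 \<and> annihilates h (n - 1) c"
proof -
  have fp: "fpoly (Suc n) c" and rf: "\<forall>\<alpha>. rat_fun (c \<alpha>)" and nz: "\<exists>\<alpha>. c \<alpha> \<noteq> (\<lambda>_. 0)"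
    and ev: "\<forall>\<^sub>\<approx>z. fpoly_eval (Suc n) c (\<lambda>i. (deriv ^^ i) h z) z = 0"
    using ann by (auto simp: annihilates_def)
  have van: "\<alpha> i = 0" if "c \<alpha> \<noteq> (\<lambda>_. 0)" "i \<ge> n" for \<alpha> i
    using fp deg that unfolding fpoly_def var_degree_le_def by (cases "i = n") (auto simp: Suc_le_eq)
  show ?thesis
  proof (cases n)
    case 0
    obtain \<alpha> where \<alpha>: "c \<alpha> \<noteq> (\<lambda>_. 0)" using nz by blast
    have "\<alpha>' = (\<lambda>_. 0)" if "c \<alpha>' \<noteq> (\<lambda>_. 0)" for \<alpha>' using van[OF that] 0 by auto
    hence S: "{\<alpha>. c \<alpha> \<noteq> (\<lambda>_. 0)} = {\<lambda>_. 0}" using \<alpha> by auto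
    have "\<forall>\<^sub>\<approx>z. c (\<lambda>_. 0) z \<noteq> 0" using rat_fun_eventually_nonzero rf S by auto
    moreover have "\<forall>\<^sub>\<approx>z. c (\<lambda>_. 0) z = 0" using ev by (simp add: fpoly_eval_def S 0)
    ultimately have "\<forall>\<^sub>\<approx>z::complex. False" by eventually_elim auto
    thus ?thesis by (simp add: trivial_limit_def[symmetric])
  next
    case (Suc m)
    have "fpoly_eval (Suc n) c X z = fpoly_eval (Suc m) c X z" for X z
      unfolding fpoly_eval_def
    proof (rule sum.cong[OF refl])
      fix \<alpha> assume "\<alpha> \<in> {\<alpha>. c \<alpha> \<noteq> (\<lambda>_. 0)}"
      hence "\<alpha> n = 0" using van by auto
      thus "c \<alpha> z * (\<Prod>i<Suc n. X i ^ \<alpha> i) = c \<alpha> z * (\<Prod>i<Suc m. X i ^ \<alpha> i)" using Suc by simp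
    qed
    thus ?thesis using fp rf nz ev van Suc by (auto simp: annihilates_def fpoly_def)
  qed
qed

text \<open>Choose an annihilator of least order n and, among those, of least degree in x_n.  Its
  partial derivative in x_n has smaller degree, so it cannot annihilate h, and it is nonzero
  because the degree is positive (degree 0 would give an annihilator of order n - 1).\<close>

lemma annihilator_with_nonzero_separant:
  assumes "diff_alg h"
  obtains n c where "annihilates h n c"
    "\<not> (\<forall>\<^sub>\<approx>z. fpoly_eval (Suc n) (partial_coeffs n c) (\<lambda>i. (deriv ^^ i) h z) z = 0)"
proof -
  define n where "n = (LEAST n. \<exists>c. annihilates h n c)"
  have "\<exists>n c. annihilates h n c" using assms by (simp add: diff_alg_def annihilates_def)
  hence "\<exists>c. annihilates h n c" unfolding n_def by (rule LeastI_ex)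
  hence ex_d: "\<exists>d c. annihilates h n c \<and> var_degree_le n c d"
    using fpoly_var_degree_le unfolding annihilates_def by blast
  define d where "d = (LEAST d. \<exists>c. annihilates h n c \<and> var_degree_le n c d)"
  obtain c where c: "annihilates h n c" "var_degree_le n c d"
    using LeastI_ex[OF ex_d] unfolding d_def by blast
  have "\<not> var_degree_le n c 0"
  proof
    assume "var_degree_le n c 0"
    hence "n \<noteq> 0" "annihilates h (n - 1) c" using annihilates_var_degree_0[OF c(1)] by auto
    moreover have "\<not> (\<exists>c. annihilates h (n - 1) c)" if "n \<noteq> 0"
      using not_less_Least[of "n - 1" "\<lambda>n. \<exists>c. annihilates h n c"] that by (simp add: n_def)
    ultimately show False by blast
  qed
  then obtain \<alpha> where \<alpha>: "c \<alpha> \<noteq> (\<lambda>_. 0)" "\<alpha> n \<noteq> 0" unfolding var_degree_le_def by auto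
  obtain d' where d': "d = Suc d'" using c(2) \<open>\<not> var_degree_le n c 0\<close> by (cases d) auto
  have "\<not> (\<exists>c. annihilates h n c \<and> var_degree_le n c d')"
    using not_less_Least[of d' "\<lambda>d. \<exists>c. annihilates h n c \<and> var_degree_le n c d"] d'
    by (simp add: d_def)
  hence "\<not> annihilates h n (partial_coeffs n c)"
    using var_degree_le_partial_coeffs c(2) d' by blast
  moreover have "fpoly (Suc n) (partial_coeffs n c)" "\<forall>\<beta>. rat_fun (partial_coeffs n c \<beta>)"
    using c(1) by (auto simp: annihilates_def intro: fpoly_partial_coeffs rat_fun_partial_coeffs)
  ultimately show ?thesis
    using that[OF c(1)] partial_coeffs_nonzero[of c \<alpha> n, OF \<alpha>] by (auto simp: annihilates_def)
qed

lemma annihilator_derivative_identity: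
  assumes h: "h meromorphic_on UNIV" and ann: "annihilates h n c"
  obtains T where "T \<in> gen_field ((\<lambda>i. (deriv ^^ i) h) ` {..n})"
    "\<forall>\<^sub>\<approx>z. T z + fpoly_eval (Suc n) (partial_coeffs n c) (\<lambda>i. (deriv ^^ i) h z) z * (deriv ^^ Suc n) h z = 0"
proof -
  define Y where "Y = (\<lambda>i. (deriv ^^ i) h)"
  define G where "G = Y ` {..n}"
  define T where "T z = (\<Sum>\<alpha>\<in>{\<alpha>. c \<alpha> \<noteq> (\<lambda>_. 0)}. deriv (c \<alpha>) z * (\<Prod>i<Suc n. Y i z ^ \<alpha> i) + c \<alpha> z *
        (\<Sum>i<n. of_nat (\<alpha> i) * (Y (Suc i) z * Y i z ^ (\<alpha> i - Suc 0)) * (\<Prod>j\<in>{..<Suc n}-{i}. Y j z ^ \<alpha> j)))"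
    for z
  have fp: "fpoly (Suc n) c" and rf: "\<forall>\<alpha>. rat_fun (c \<alpha>)"
    and ev: "\<forall>\<^sub>\<approx>z. fpoly_eval (Suc n) c (\<lambda>i. Y i z) z = 0"
    using ann by (auto simp: annihilates_def Y_def)
  have Y_mero: "Y i meromorphic_on UNIV" for i unfolding Y_def using h by (rule meromorphic_on_higher_deriv)
  have YG: "Y i \<in> gen_field G" if "i \<le> n" for i using that by (intro gen_field_gen) (auto simp: G_def)
  have c_G: "c \<alpha> \<in> gen_field G" for \<alpha>
    using rf by (intro gen_field_rat_fun) auto
  have "deriv (c \<alpha>) \<in> gen_field {}" for \<alpha>
    using rf by (intro gen_field_deriv gen_field_rat_fun) auto
  hence dc_G: "deriv (c \<alpha>) \<in> gen_field G" for \<alpha>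
    by (rule gen_field_mono) auto
  have "T \<in> gen_field G" unfolding T_def
    by (intro gen_field_sum gen_field_add gen_field_mult gen_field_prod gen_field_power
        gen_field_const YG c_G dc_G) auto
  moreover have "\<forall>\<^sub>\<approx>z. T z + fpoly_eval (Suc n) (partial_coeffs n c) (\<lambda>i. Y i z) z * Y (Suc n) z = 0"
  proof -
    have "\<forall>\<^sub>\<approx>z. \<forall>\<alpha>\<in>{\<alpha>. c \<alpha> \<noteq> (\<lambda>_. 0)}. (c \<alpha> has_field_derivative deriv (c \<alpha>) z) (at z)"
      using fp rf by (subst eventually_ball_finite_distrib)
        (auto simp: fpoly_def intro!: meromorphic_eventually_has_deriv rat_fun_meromorphic)
    moreover have "\<forall>\<^sub>\<approx>z. \<forall>i\<in>{..n}. (Y i has_field_derivative Y (Suc i) z) (at z)"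
      using Y_mero meromorphic_eventually_has_deriv by (subst eventually_ball_finite_distrib) (auto simp: Y_def)
    moreover note eventually_cosparse_imp_eventually_nhds[OF ev]
    ultimately show ?thesis
    proof eventually_elim
      case (elim z)
      have "((\<lambda>w. fpoly_eval (Suc n) c (\<lambda>i. Y i w) w) has_field_derivative
          T z + fpoly_eval (Suc n) (partial_coeffs n c) (\<lambda>i. Y i z) z * Y (Suc n) z) (at z)"
        unfolding T_def by (rule fpoly_eval_has_field_derivative[OF fp]) (use elim in auto)
      moreover have "((\<lambda>w. fpoly_eval (Suc n) c (\<lambda>i. Y i w) w) has_field_derivative 0) (at z)"
        by (subst DERIV_cong_ev[OF refl elim(3) refl]) simp
      ultimately show ?case by (rule DERIV_unique)
    qed
  qed
  ultimately show ?thesis unfolding Y_def G_def by (rule that)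
qed

lemma annihilator_next_deriv_in_gen_field:
  assumes h: "h meromorphic_on UNIV" and ann: "annihilates h n c"
    and sep: "\<forall>\<^sub>\<approx>z. fpoly_eval (Suc n) (partial_coeffs n c) (\<lambda>i. (deriv ^^ i) h z) z \<noteq> 0"
  shows "(deriv ^^ Suc n) h \<in> gen_field ((\<lambda>i. (deriv ^^ i) h) ` {..n})"
proof -
  let ?G = "(\<lambda>i. (deriv ^^ i) h) ` {..n}"
  let ?S = "\<lambda>z. fpoly_eval (Suc n) (partial_coeffs n c) (\<lambda>i. (deriv ^^ i) h z) z"
  obtain T where T: "T \<in> gen_field ?G" "\<forall>\<^sub>\<approx>z. T z + ?S z * (deriv ^^ Suc n) h z = 0"
    by (rule annihilator_derivative_identity[OF h ann])
  have G_mero: "\<forall>g\<in>?G. g meromorphic_on UNIV" using h by (auto intro: meromorphic_on_higher_deriv)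
  have "partial_coeffs n c \<beta> \<in> gen_field ?G" for \<beta>
    using ann by (intro gen_field_rat_fun rat_fun_partial_coeffs) (simp add: annihilates_def)
  moreover have "(deriv ^^ i) h \<in> gen_field ?G" if "i < Suc n" for i
    using that by (intro gen_field_gen) auto
  ultimately have "?S \<in> gen_field ?G" by (intro fpoly_eval_gen_field) auto
  moreover have "\<forall>\<^sub>\<approx>z. - T z / ?S z = (deriv ^^ Suc n) h z"
    using T(2) sep by eventually_elim (simp add: field_simps add_eq_0_iff)
  ultimately show ?thesis by (rule gen_field_cong[OF gen_field_divide[OF gen_field_uminus[OF T(1)] _ G_mero]])
qed

lemma diff_alg_imp_diff_gens:
  assumes h: "h meromorphic_on UNIV" and "diff_alg h"
  shows "\<exists>G. diff_gens G \<and> h \<in> gen_field G"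
proof -
  obtain n c where ann: "annihilates h n c"
    and "\<not> (\<forall>\<^sub>\<approx>z. fpoly_eval (Suc n) (partial_coeffs n c) (\<lambda>i. (deriv ^^ i) h z) z = 0)"
    using annihilator_with_nonzero_separant[OF \<open>diff_alg h\<close>] .
  moreover have "(\<lambda>z. fpoly_eval (Suc n) (partial_coeffs n c) (\<lambda>i. (deriv ^^ i) h z) z) meromorphic_on UNIV"
    using ann h by (intro fpoly_eval_meromorphic)
      (auto simp: annihilates_def intro: rat_fun_partial_coeffs meromorphic_on_higher_deriv)
  ultimately have sep: "\<forall>\<^sub>\<approx>z. fpoly_eval (Suc n) (partial_coeffs n c) (\<lambda>i. (deriv ^^ i) h z) z \<noteq> 0"
    using meromorphic_zero_or_eventually_nonzero by blast
  define G where "G = (\<lambda>i. (deriv ^^ i) h) ` {..n}"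
  have "deriv ((deriv ^^ i) h) \<in> gen_field G" if "i \<le> n" for i
  proof (cases "i = n")
    case True
    thus ?thesis using annihilator_next_deriv_in_gen_field[OF h ann sep] by (simp add: G_def)
  next
    case False
    hence "Suc i \<in> {..n}" using that by simp
    hence "(deriv ^^ Suc i) h \<in> G" unfolding G_def by (rule imageI)
    thus ?thesis by (simp add: gen_field_gen)
  qed
  hence "diff_gens G"
    using h by (auto simp: diff_gens_def G_def intro: meromorphic_on_higher_deriv)
  moreover have "h \<in> gen_field G" by (rule gen_field_gen) (force simp: G_def)
  ultimately show ?thesis by blast
qed

lemma diff_alg_compose_imp_diff_gens:
  assumes b: "b meromorphic_on UNIV" "diff_alg b"
    and e: "e holomorphic_on UNIV" "deriv e \<noteq> (\<lambda>_. 0)" "diff_alg e"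
  shows "\<exists>G. diff_gens G \<and> (\<lambda>z. b (e z)) \<in> gen_field G"
proof -
  obtain G where G: "diff_gens G" "b \<in> gen_field G" using diff_alg_imp_diff_gens[OF b] by blast
  have "e meromorphic_on UNIV" using e(1) by (simp add: analytic_on_open analytic_on_imp_meromorphic_on)
  then obtain Ge where Ge: "diff_gens Ge" "e \<in> gen_field Ge" using diff_alg_imp_diff_gens e(3) by blast
  show ?thesis
    using diff_gens_compose[OF G(1) Ge e(1,2)] gen_field_compose[OF e(1,2) G(2)]
    by (blast intro: gen_field_mono)
qed

section \<open>Differential fields of finite transcendence degree\<close>

lemma gen_field_common_denominator:
  fixes N :: nat
  assumes "\<And>j. j < N \<Longrightarrow> x j \<in> gen_field G"
  shows "\<exists>A B. (\<forall>j<N. A j \<in> gen_ring G) \<and> B \<in> gen_ring G \<and>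
    (\<forall>\<^sub>\<approx>z. B z \<noteq> 0 \<and> (\<forall>j<N. x j z = A j z / B z))"
  using assms
proof (induction N)
  case 0
  show ?case by (intro exI[of _ "\<lambda>_ _. 0"] exI[of _ "\<lambda>_. 1"]) (auto intro: gen_ring_const)
next
  case (Suc N)
  have "\<exists>A B. (\<forall>j<N. A j \<in> gen_ring G) \<and> B \<in> gen_ring G \<and>
      (\<forall>\<^sub>\<approx>z. B z \<noteq> 0 \<and> (\<forall>j<N. x j z = A j z / B z))"
    using Suc.prems by (intro Suc.IH) auto
  then obtain A B where AB: "\<forall>j<N. A j \<in> gen_ring G" "B \<in> gen_ring G"
      "\<forall>\<^sub>\<approx>z. B z \<noteq> 0 \<and> (\<forall>j<N. x j z = A j z / B z)"
    by blast
  obtain A' B' where A'B': "A' \<in> gen_ring G" "B' \<in> gen_ring G" "\<forall>\<^sub>\<approx>z. B' z \<noteq> 0"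
      "\<forall>\<^sub>\<approx>z. x N z = A' z / B' z"
    using Suc.prems[of N] by (blast elim: gen_fieldE)
  have "(\<lambda>z. if j = N then A' z * B z else A j z * B' z) \<in> gen_ring G" if "j < Suc N" for j
    using that AB(1,2) A'B'(1,2) by (cases "j = N") (auto intro: gen_ring_mult)
  moreover have "(\<lambda>z. B z * B' z) \<in> gen_ring G" using AB(2) A'B'(2) by (rule gen_ring_mult)
  moreover have "\<forall>\<^sub>\<approx>z. B z * B' z \<noteq> 0 \<and>
      (\<forall>j<Suc N. x j z = (if j = N then A' z * B z else A j z * B' z) / (B z * B' z))"
    using AB(3) A'B'(3,4) by eventually_elim (auto simp: less_Suc_eq)
  ultimately show ?case
    by (intro exI[of _ "\<lambda>j z. if j = N then A' z * B z else A j z * B' z"] exI[of _ "\<lambda>z. B z * B' z"])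
      auto
qed

lemma prod_power_common_denominator:
  fixes A x :: "nat \<Rightarrow> 'a::field"
  assumes "B \<noteq> 0" "\<And>j. j < N \<Longrightarrow> x j = A j / B" "(\<Sum>j<N. \<alpha> j) \<le> E"
  shows "(\<Prod>j<N. x j ^ \<alpha> j) = (\<Prod>j<N. A j ^ \<alpha> j) * B ^ (E - (\<Sum>j<N. \<alpha> j)) / B ^ E"
proof -
  have "(\<Prod>j<N. x j ^ \<alpha> j) = (\<Prod>j<N. (A j / B) ^ \<alpha> j)"
    using assms(2) by (intro prod.cong) auto
  also have "\<dots> = (\<Prod>j<N. A j ^ \<alpha> j) / B ^ (\<Sum>j<N. \<alpha> j)"
    by (simp add: power_divide prod_dividef power_sum)
  also have "\<dots> = (\<Prod>j<N. A j ^ \<alpha> j) * B ^ (E - (\<Sum>j<N. \<alpha> j)) / B ^ E"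
  proof -
    have "B ^ E = B ^ (\<Sum>j<N. \<alpha> j) * B ^ (E - (\<Sum>j<N. \<alpha> j))"
      using assms(3) by (simp flip: power_add)
    thus ?thesis using assms(1) by (simp add: field_simps)
  qed
  finally show ?thesis .
qed

definition exps_le :: "nat \<Rightarrow> nat \<Rightarrow> (nat \<Rightarrow> nat) set" where
  "exps_le r c = {\<gamma>. (\<forall>i<r. \<gamma> i \<le> c) \<and> (\<forall>i\<ge>r. \<gamma> i = 0)}"

lemma exps_le_Suc: "exps_le (Suc r) c = (\<lambda>(\<gamma>, t). \<gamma>(r := t)) ` (exps_le r c \<times> {..c})"
proof
  show "exps_le (Suc r) c \<subseteq> (\<lambda>(\<gamma>, t). \<gamma>(r := t)) ` (exps_le r c \<times> {..c})"
  proof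
    fix \<gamma> assume "\<gamma> \<in> exps_le (Suc r) c"
    hence "(\<gamma>(r := 0), \<gamma> r) \<in> exps_le r c \<times> {..c}" by (auto simp: exps_le_def)
    moreover have "\<gamma> = (\<lambda>(\<gamma>, t). \<gamma>(r := t)) (\<gamma>(r := 0), \<gamma> r)" by auto
    ultimately show "\<gamma> \<in> (\<lambda>(\<gamma>, t). \<gamma>(r := t)) ` (exps_le r c \<times> {..c})" by blast
  qed
qed (auto simp: exps_le_def less_Suc_eq)

lemma inj_on_exps_le_extend: "inj_on (\<lambda>(\<gamma>, t). \<gamma>(r := t)) (exps_le r c \<times> {..c})"
proof (rule inj_onI, clarify)
  fix \<gamma> t \<gamma>' t' assume \<gamma>: "\<gamma> \<in> exps_le r c" "\<gamma>' \<in> exps_le r c" and eq: "\<gamma>(r := t) = \<gamma>'(r := t')"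
  have "\<gamma> i = \<gamma>' i" for i
    using fun_cong[OF eq, of i] \<gamma> by (cases "i = r") (auto simp: exps_le_def)
  moreover have "t = t'" using fun_cong[OF eq, of r] by simp
  ultimately show "\<gamma> = \<gamma>' \<and> t = t'" by auto
qed

lemma card_exps_le: "finite (exps_le r c) \<and> card (exps_le r c) = (c + 1) ^ r"
proof (induction r)
  case 0
  have "exps_le 0 c = {\<lambda>_. 0}" by (auto simp: exps_le_def)
  thus ?case by simp
next
  case (Suc r)
  thus ?case unfolding exps_le_Suc
    by (simp add: card_image[OF inj_on_exps_le_extend] card_cartesian_product)
qed

interpretation fun_vs: vector_space "\<lambda>a (f :: complex \<Rightarrow> complex) z. a * f z"
  by unfold_locales (auto simp: fun_eq_iff algebra_simps)

lemma sum_apply: "(\<Sum>v\<in>t. F v) z = (\<Sum>v\<in>t. F v z)"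
  by (induction t rule: infinite_finite_induct) auto

lemma (in vector_space) family_dependent_explicit:
  fixes w :: "'c \<Rightarrow> 'b"
  assumes I: "finite I" and w: "w ` I \<subseteq> span M" and M: "finite M" and card: "card M < card I"
  obtains C :: "'c \<Rightarrow> 'a" where "\<exists>i\<in>I. C i \<noteq> 0" "(\<Sum>i\<in>I. scale (C i) (w i)) = 0"
proof (cases "inj_on w I")
  case True
  have "dependent (w ` I)"
  proof (rule ccontr)
    assume "independent (w ` I)"
    hence "card (w ` I) \<le> card M" using independent_span_bound[OF M _ w] by blast
    thus False using card_image[OF True] card by simp
  qed
  then obtain t u v where tu: "finite t" "t \<subseteq> w ` I" "(\<Sum>v\<in>t. scale (u v) v) = 0" "v \<in> t" "u v \<noteq> 0"
    unfolding dependent_explicit by blast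
  define C :: "'c \<Rightarrow> 'a" where "C i = (if w i \<in> t then u (w i) else 0)" for i
  have "(\<Sum>i\<in>I. scale (C i) (w i)) = (\<Sum>i\<in>{i\<in>I. w i \<in> t}. scale (u (w i)) (w i))"
    unfolding C_def by (rule sum.mono_neutral_cong_right) (use I in auto)
  also have "\<dots> = (\<Sum>v\<in>w ` {i\<in>I. w i \<in> t}. scale (u v) v)"
    by (rule sum.reindex[symmetric, unfolded comp_def]) (rule inj_on_subset[OF True], auto)
  also have "w ` {i\<in>I. w i \<in> t} = t" using tu(2) by auto
  finally have "(\<Sum>i\<in>I. scale (C i) (w i)) = 0" using tu(3) by simp
  moreover have "\<exists>i\<in>I. C i \<noteq> 0" using tu(2,4,5) by (auto simp: C_def)
  ultimately show ?thesis using that by blast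
next
  case False
  then obtain i1 i2 where i: "i1 \<in> I" "i2 \<in> I" "i1 \<noteq> i2" "w i1 = w i2" unfolding inj_on_def by blast
  define C :: "'c \<Rightarrow> 'a" where "C i = (if i = i1 then 1 else if i = i2 then -1 else 0)" for i
  have "(\<Sum>i\<in>I. scale (C i) (w i)) = (\<Sum>i\<in>{i1, i2}. scale (C i) (w i))"
    by (rule sum.mono_neutral_right) (use I i in \<open>auto simp: C_def\<close>)
  also have "\<dots> = 0" using i by (simp add: C_def)
  finally have "(\<Sum>i\<in>I. scale (C i) (w i)) = 0" .
  moreover have "C i1 \<noteq> 0" by (simp add: C_def)
  ultimately show ?thesis using that i(1) by blast
qed

definition monomial_fun :: "(nat \<Rightarrow> complex \<Rightarrow> complex) \<Rightarrow> nat \<Rightarrow> nat \<times> (nat \<Rightarrow> nat) \<Rightarrow> complex \<Rightarrow> complex"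
  where "monomial_fun g r kg = (\<lambda>z. z ^ fst kg * (\<Prod>i<r. g i z ^ snd kg i))"

definition monomial_span :: "(nat \<Rightarrow> complex \<Rightarrow> complex) \<Rightarrow> nat \<Rightarrow> nat \<Rightarrow> (complex \<Rightarrow> complex) set"
  where "monomial_span g r c = fun_vs.span (monomial_fun g r ` ({..c} \<times> exps_le r c))"

lemma card_monomials_le:
  "finite (monomial_fun g r ` ({..c} \<times> exps_le r c)) \<and>
   card (monomial_fun g r ` ({..c} \<times> exps_le r c)) \<le> (c + 1) ^ Suc r"
  using card_image_le[of "{..c} \<times> exps_le r c" "monomial_fun g r"] card_exps_le[of r c]
  by (simp add: card_cartesian_product)

lemma monomial_span_mono: "c \<le> c' \<Longrightarrow> monomial_span g r c \<subseteq> monomial_span g r c'"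
  unfolding monomial_span_def by (intro fun_vs.span_mono image_mono) (auto simp: exps_le_def)

lemma monomial_span_add:
  "f \<in> monomial_span g r c \<Longrightarrow> h \<in> monomial_span g r c \<Longrightarrow> (\<lambda>z. f z + h z) \<in> monomial_span g r c"
  unfolding monomial_span_def using fun_vs.span_add[of f _ h] by (simp add: plus_fun_def)

lemma monomial_span_scale: "f \<in> monomial_span g r c \<Longrightarrow> (\<lambda>z. a * f z) \<in> monomial_span g r c"
  unfolding monomial_span_def by (rule fun_vs.span_scale)

lemma monomial_span_base:
  "k \<le> c \<Longrightarrow> \<gamma> \<in> exps_le r c \<Longrightarrow> monomial_fun g r (k, \<gamma>) \<in> monomial_span g r c"
  unfolding monomial_span_def by (rule fun_vs.span_base) auto

lemma monomial_span_const: "(\<lambda>z. a) \<in> monomial_span g r c"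
  using monomial_span_scale[OF monomial_span_base[of 0 c "\<lambda>_. 0" r g], of a]
  by (simp add: exps_le_def monomial_fun_def)

lemma monomial_fun_mult:
  "(\<lambda>z. monomial_fun g r (k, \<gamma>) z * monomial_fun g r (k', \<gamma>') z) = monomial_fun g r (k + k', \<lambda>i. \<gamma> i + \<gamma>' i)"
  by (auto simp: monomial_fun_def fun_eq_iff power_add prod.distrib algebra_simps)

lemma monomial_span_mult_monomial:
  assumes "k \<le> c1" "\<gamma> \<in> exps_le r c1" "h \<in> monomial_span g r c2"
  shows "(\<lambda>z. monomial_fun g r (k, \<gamma>) z * h z) \<in> monomial_span g r (c1 + c2)"
  using assms(3) unfolding monomial_span_def[of g r c2]
proof (induction rule: fun_vs.span_induct_alt)
  case base
  show ?case using monomial_span_const[of 0] by simp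
next
  case (step a x y)
  obtain k' \<gamma>' where x: "x = monomial_fun g r (k', \<gamma>')" "k' \<le> c2" "\<gamma>' \<in> exps_le r c2"
    using step(1) by auto
  have "(\<lambda>i. \<gamma> i + \<gamma>' i) \<in> exps_le r (c1 + c2)"
    using assms(2) x(3) by (auto simp: exps_le_def intro: add_mono)
  hence "(\<lambda>z. monomial_fun g r (k, \<gamma>) z * x z) \<in> monomial_span g r (c1 + c2)"
    unfolding x(1) monomial_fun_mult using assms(1) x(2) by (intro monomial_span_base) auto
  hence "(\<lambda>z. a * (monomial_fun g r (k, \<gamma>) z * x z) + monomial_fun g r (k, \<gamma>) z * y z)
      \<in> monomial_span g r (c1 + c2)"
    by (intro monomial_span_add monomial_span_scale step(2))
  thus ?case by (simp add: plus_fun_def algebra_simps)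
qed

lemma monomial_span_mult:
  assumes "f \<in> monomial_span g r c1" "h \<in> monomial_span g r c2"
  shows "(\<lambda>z. f z * h z) \<in> monomial_span g r (c1 + c2)"
  using assms(1) unfolding monomial_span_def[of g r c1]
proof (induction rule: fun_vs.span_induct_alt)
  case base
  show ?case using monomial_span_const[of 0] by simp
next
  case (step a x y)
  then obtain k \<gamma> where x: "x = monomial_fun g r (k, \<gamma>)" "k \<le> c1" "\<gamma> \<in> exps_le r c1" by auto
  have "(\<lambda>z. x z * h z) \<in> monomial_span g r (c1 + c2)"
    unfolding x(1) using x(2,3) assms(2) by (rule monomial_span_mult_monomial)
  hence "(\<lambda>z. a * (x z * h z) + y z * h z) \<in> monomial_span g r (c1 + c2)"
    by (intro monomial_span_add monomial_span_scale step(2))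
  thus ?case by (simp add: plus_fun_def algebra_simps)
qed

lemma monomial_span_prod:
  assumes "finite J" "\<And>j. j \<in> J \<Longrightarrow> f j \<in> monomial_span g r (c j)"
  shows "(\<lambda>z. \<Prod>j\<in>J. f j z) \<in> monomial_span g r (\<Sum>j\<in>J. c j)"
  using assms
  by (induction J rule: finite_induct)
    (auto intro: monomial_span_const monomial_span_mult[of "f _" g r "c _" "\<lambda>z. \<Prod>j\<in>_. f j z", simplified])

lemma monomial_span_power:
  "f \<in> monomial_span g r c \<Longrightarrow> (\<lambda>z. f z ^ n) \<in> monomial_span g r (n * c)"
  using monomial_span_prod[of "{..<n}" "\<lambda>_. f" g r "\<lambda>_. c"] by simp

lemma gen_ring_in_monomial_span:
  assumes "G \<subseteq> g ` {..<r}" "f \<in> gen_ring G"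
  shows "\<exists>c. f \<in> monomial_span g r c"
  using assms(2)
proof (induction rule: gen_ring.induct)
  case (gen_ring_const a)
  show ?case using monomial_span_const by blast
next
  case gen_ring_id
  have "monomial_fun g r (1, \<lambda>_. 0) \<in> monomial_span g r 1"
    by (rule monomial_span_base) (auto simp: exps_le_def)
  thus ?case by (auto simp: monomial_fun_def)
next
  case (gen_ring_gen h)
  then obtain i where i: "i < r" "h = g i" using assms(1) by auto
  have "monomial_fun g r (0, \<lambda>j. if j = i then 1 else 0) \<in> monomial_span g r 1"
    by (rule monomial_span_base) (use i in \<open>auto simp: exps_le_def\<close>)
  moreover have "monomial_fun g r (0, \<lambda>j. if j = i then 1 else 0) = g i"
  proof
    fix z
    have "(\<Prod>j<r. g j z ^ (if j = i then 1 else 0)) = (\<Prod>j<r. if j = i then g j z else 1)"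
      by (rule prod.cong) auto
    thus "monomial_fun g r (0, \<lambda>j. if j = i then 1 else 0) z = g i z"
      using i(1) by (simp add: monomial_fun_def prod.delta)
  qed
  ultimately show ?case using i by auto
next
  case (gen_ring_add f h)
  then obtain c1 c2 where "f \<in> monomial_span g r c1" "h \<in> monomial_span g r c2" by blast
  hence "f \<in> monomial_span g r (max c1 c2)" "h \<in> monomial_span g r (max c1 c2)"
    using monomial_span_mono[of c1 "max c1 c2" g r] monomial_span_mono[of c2 "max c1 c2" g r] by auto
  thus ?case using monomial_span_add by blast
next
  case (gen_ring_mult f h)
  thus ?case using monomial_span_mult by blast
qed

lemma finite_gen_ring_in_monomial_span:
  assumes "finite F" "F \<subseteq> gen_ring G" "G \<subseteq> g ` {..<r}"
  shows "\<exists>c. F \<subseteq> monomial_span g r c"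
  using assms(1,2)
proof (induction F rule: finite_induct)
  case (insert f F)
  obtain c where "F \<subseteq> monomial_span g r c" using insert by auto
  moreover obtain c' where "f \<in> monomial_span g r c'"
    using gen_ring_in_monomial_span[OF assms(3), of f] insert.prems by auto
  ultimately have "insert f F \<subseteq> monomial_span g r (max c c')"
    using monomial_span_mono[of c "max c c'" g r] monomial_span_mono[of c' "max c c'" g r] by auto
  thus ?case by blast
qed simp

lemma numerator_in_monomial_span:
  assumes A: "\<And>j. j < N \<Longrightarrow> A j \<in> monomial_span g r c" and B: "B \<in> monomial_span g r c"
    and k: "k \<le> d" and \<alpha>: "\<alpha> \<in> exps_le N d"
  shows "(\<lambda>z. z ^ k * (\<Prod>j<N. A j z ^ \<alpha> j) * B z ^ (N * d - (\<Sum>j<N. \<alpha> j)))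
    \<in> monomial_span g r (d * (1 + N * c))"
proof -
  let ?s = "\<Sum>j<N. \<alpha> j"
  have s: "?s \<le> N * d"
    using sum_bounded_above[of "{..<N}" \<alpha> d] \<alpha> by (auto simp: exps_le_def)
  have "(\<lambda>z. z ^ k) \<in> monomial_span g r k"
    using monomial_span_base[of 1 1 "\<lambda>_. 0" r g] monomial_span_power[of _ g r 1 k]
    by (auto simp: exps_le_def monomial_fun_def)
  moreover have "(\<lambda>z. \<Prod>j<N. A j z ^ \<alpha> j) \<in> monomial_span g r (\<Sum>j<N. \<alpha> j * c)"
    by (intro monomial_span_prod monomial_span_power A) auto
  moreover have "(\<lambda>z. B z ^ (N * d - ?s)) \<in> monomial_span g r ((N * d - ?s) * c)"
    by (intro monomial_span_power B)
  ultimately have "(\<lambda>z. z ^ k * (\<Prod>j<N. A j z ^ \<alpha> j) * B z ^ (N * d - ?s))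
      \<in> monomial_span g r (k + (\<Sum>j<N. \<alpha> j * c) + (N * d - ?s) * c)"
    by (intro monomial_span_mult)
  also have "k + (\<Sum>j<N. \<alpha> j * c) + (N * d - ?s) * c = k + N * d * c"
    using s by (simp add: sum_distrib_right[symmetric] add_mult_distrib[symmetric])
  also have "monomial_span g r (k + N * d * c) \<subseteq> monomial_span g r (d * (1 + N * c))"
    using k by (intro monomial_span_mono) (simp add: algebra_simps)
  finally show ?thesis .
qed

lemma monomial_count_less:
  fixes K r :: nat
  assumes "K \<ge> 1"
  shows "(K ^ Suc r * K + 1) ^ Suc r < (K ^ Suc r + 1) ^ Suc (Suc r)"
proof -
  let ?d = "K ^ Suc r"
  have "(?d * K + 1) ^ Suc r \<le> (K * (?d + 1)) ^ Suc r"
    using assms by (intro power_mono) (simp_all add: algebra_simps)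
  also have "\<dots> = ?d * (?d + 1) ^ Suc r" by (simp only: power_mult_distrib)
  also have "\<dots> < (?d + 1) ^ Suc (Suc r)" by simp
  finally show ?thesis .
qed

text \<open>The (d + 1)^(r + 2) numerators lie in the span of the at most (d K + 1)^(r + 1) monomials
  of degree at most d K in z and g 0, ..., g (r - 1); the choice d = K^(r + 1) makes the
  first number the larger one.\<close>

lemma numerators_linearly_dependent:
  assumes A: "\<And>j. j < Suc r \<Longrightarrow> A j \<in> monomial_span g r c" and B: "B \<in> monomial_span g r c"
  obtains d C where "\<exists>ka\<in>{..d} \<times> exps_le (Suc r) d. C ka \<noteq> 0"
    "\<forall>z. (\<Sum>(k, \<alpha>)\<in>{..d} \<times> exps_le (Suc r) d.
      C (k, \<alpha>) * (z ^ k * (\<Prod>j<Suc r. A j z ^ \<alpha> j) * B z ^ (Suc r * d - (\<Sum>j<Suc r. \<alpha> j)))) = 0"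
proof -
  define K where "K = 1 + Suc r * c"
  define d where "d = K ^ Suc r"
  define I where "I = {..d} \<times> exps_le (Suc r) d"
  define w where "w = (\<lambda>(k, \<alpha>) z. z ^ k * (\<Prod>j<Suc r. A j z ^ \<alpha> j) * B z ^ (Suc r * d - (\<Sum>j<Suc r. \<alpha> j)))"
  define M where "M = monomial_fun g r ` ({..d * K} \<times> exps_le r (d * K))"
  have "w i \<in> monomial_span g r (d * K)" if i: "i \<in> I" for i
  proof -
    obtain k \<alpha> where "i = (k, \<alpha>)" "k \<le> d" "\<alpha> \<in> exps_le (Suc r) d"
      using i by (auto simp: I_def)
    thus ?thesis
      using numerator_in_monomial_span[of "Suc r" A g r c B k d \<alpha>, OF A B] by (simp add: w_def K_def)
  qed
  hence span: "w ` I \<subseteq> fun_vs.span M" by (auto simp: M_def monomial_span_def)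
  have fin_I: "finite I" using card_exps_le[of "Suc r" d] by (simp add: I_def)
  have fin_M: "finite M" using card_monomials_le[of g r "d * K"] by (simp add: M_def)
  have "card M \<le> (d * K + 1) ^ Suc r" using card_monomials_le[of g r "d * K"] by (simp add: M_def)
  also have "\<dots> < (d + 1) ^ Suc (Suc r)" unfolding d_def by (rule monomial_count_less) (simp add: K_def)
  also have "\<dots> = card I" using card_exps_le[of "Suc r" d] by (simp add: I_def card_cartesian_product)
  finally obtain C where C: "\<exists>i\<in>I. C i \<noteq> 0" "(\<Sum>i\<in>I. (\<lambda>z. C i * w i z)) = 0"
    by (rule fun_vs.family_dependent_explicit[OF fin_I span fin_M])
  have "\<forall>z. (\<Sum>(k, \<alpha>)\<in>I. C (k, \<alpha>) *
      (z ^ k * (\<Prod>j<Suc r. A j z ^ \<alpha> j) * B z ^ (Suc r * d - (\<Sum>j<Suc r. \<alpha> j)))) = 0"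
    using fun_cong[OF C(2)] by (simp add: sum_apply w_def case_prod_unfold)
  with C(1) show ?thesis unfolding I_def by (rule that)
qed

lemma gen_field_polynomial_relation:
  assumes G: "finite G" "card G = r" and x: "\<And>j. j < Suc r \<Longrightarrow> x j \<in> gen_field G"
  obtains d C where "\<exists>ka\<in>{..d} \<times> exps_le (Suc r) d. C ka \<noteq> 0"
    "\<forall>\<^sub>\<approx>z. (\<Sum>(k, \<alpha>)\<in>{..d} \<times> exps_le (Suc r) d. C (k, \<alpha>) * (z ^ k * (\<Prod>j<Suc r. x j z ^ \<alpha> j))) = 0"
proof -
  obtain g where "bij_betw g {0..<r} G" using ex_bij_betw_nat_finite[OF G(1)] G(2) by blast
  hence Gg: "G \<subseteq> g ` {..<r}" by (auto simp: bij_betw_def atLeast0LessThan)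
  obtain A B where AB: "\<forall>j<Suc r. A j \<in> gen_ring G" "B \<in> gen_ring G"
      "\<forall>\<^sub>\<approx>z. B z \<noteq> 0 \<and> (\<forall>j<Suc r. x j z = A j z / B z)"
    using gen_field_common_denominator[of "Suc r" x G, OF x] by blast
  obtain c where "insert B (A ` {..<Suc r}) \<subseteq> monomial_span g r c"
    using finite_gen_ring_in_monomial_span[of "insert B (A ` {..<Suc r})" G g r] AB(1,2) Gg by auto
  hence cA: "\<And>j. j < Suc r \<Longrightarrow> A j \<in> monomial_span g r c" and cB: "B \<in> monomial_span g r c"
    by auto
  obtain d C where C: "\<exists>ka\<in>{..d} \<times> exps_le (Suc r) d. C ka \<noteq> 0"
    "\<forall>z. (\<Sum>(k, \<alpha>)\<in>{..d} \<times> exps_le (Suc r) d.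
      C (k, \<alpha>) * (z ^ k * (\<Prod>j<Suc r. A j z ^ \<alpha> j) * B z ^ (Suc r * d - (\<Sum>j<Suc r. \<alpha> j)))) = 0"
    by (rule numerators_linearly_dependent[of r A g c B, OF cA cB])
  define I where "I = {..d} \<times> exps_le (Suc r) d"
  have "\<forall>\<^sub>\<approx>z. (\<Sum>(k, \<alpha>)\<in>I. C (k, \<alpha>) * (z ^ k * (\<Prod>j<Suc r. x j z ^ \<alpha> j))) = 0"
    using AB(3)
  proof eventually_elim
    case (elim z)
    let ?E = "Suc r * d"
    have "z ^ k * (\<Prod>j<Suc r. x j z ^ \<alpha> j) =
        z ^ k * (\<Prod>j<Suc r. A j z ^ \<alpha> j) * B z ^ (?E - (\<Sum>j<Suc r. \<alpha> j)) / B z ^ ?E"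
      if "(k, \<alpha>) \<in> I" for k \<alpha>
    proof -
      have "\<alpha> j \<le> d" if "j \<in> {..<Suc r}" for j
        using \<open>(k, \<alpha>) \<in> I\<close> that by (auto simp: I_def exps_le_def)
      hence "(\<Sum>j<Suc r. \<alpha> j) \<le> ?E" using sum_bounded_above[of "{..<Suc r}" \<alpha> d] by simp
      hence "(\<Prod>j<Suc r. x j z ^ \<alpha> j) =
          (\<Prod>j<Suc r. A j z ^ \<alpha> j) * B z ^ (?E - (\<Sum>j<Suc r. \<alpha> j)) / B z ^ ?E"
        using elim by (intro prod_power_common_denominator) auto
      thus ?thesis by (simp add: mult.assoc)
    qed
    hence "(\<Sum>(k, \<alpha>)\<in>I. C (k, \<alpha>) * (z ^ k * (\<Prod>j<Suc r. x j z ^ \<alpha> j))) =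
        (\<Sum>(k, \<alpha>)\<in>I. C (k, \<alpha>) *
          (z ^ k * (\<Prod>j<Suc r. A j z ^ \<alpha> j) * B z ^ (?E - (\<Sum>j<Suc r. \<alpha> j)) / B z ^ ?E))"
      by (intro sum.cong) auto
    also have "\<dots> = (\<Sum>(k, \<alpha>)\<in>I. C (k, \<alpha>) *
          (z ^ k * (\<Prod>j<Suc r. A j z ^ \<alpha> j) * B z ^ (?E - (\<Sum>j<Suc r. \<alpha> j)))) / B z ^ ?E"
      by (simp add: sum_divide_distrib case_prod_unfold)
    also have "\<dots> = 0" using C(2) by (simp add: I_def)
    finally show ?case .
  qed
  thus ?thesis using that C(1) by (simp add: I_def)
qed

lemma diff_alg_if_polynomial_relation:
  assumes nz: "\<exists>ka\<in>{..d} \<times> exps_le (Suc r) d. C ka \<noteq> 0"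
    and rel: "\<forall>\<^sub>\<approx>z. (\<Sum>(k, \<alpha>)\<in>{..d} \<times> exps_le (Suc r) d.
      C (k, \<alpha>) * (z ^ k * (\<Prod>j<Suc r. (deriv ^^ j) a z ^ \<alpha> j))) = 0"
  shows "diff_alg a"
proof -
  define B where "B = exps_le (Suc r) d"
  define p where "p \<alpha> = (if \<alpha> \<in> B then (\<Sum>k\<le>d. monom (C (k, \<alpha>)) k) else 0)" for \<alpha>
  define c where "c \<alpha> = (\<lambda>z. poly (p \<alpha>) z)" for \<alpha>
  have finB: "finite B" using card_exps_le by (simp add: B_def)
  have c_nz: "c \<alpha> \<noteq> (\<lambda>_. 0) \<longleftrightarrow> p \<alpha> \<noteq> 0" for \<alpha>
    using poly_all_0_iff_0[of "p \<alpha>"] by (auto simp: c_def fun_eq_iff)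
  have supp: "{\<alpha>. c \<alpha> \<noteq> (\<lambda>_. 0)} \<subseteq> B" using c_nz by (auto simp: p_def)
  have "fpoly (Suc r) c"
    using finite_subset[OF supp finB] supp by (auto simp: fpoly_def B_def exps_le_def)
  moreover have "rat_fun (c \<alpha>)" for \<alpha>
    unfolding rat_fun_def c_def by (rule exI[of _ "p \<alpha>"], rule exI[of _ 1]) simp
  moreover have "\<exists>\<alpha>. c \<alpha> \<noteq> (\<lambda>_. 0)"
  proof -
    obtain k \<alpha> where k\<alpha>: "k \<le> d" "\<alpha> \<in> B" "C (k, \<alpha>) \<noteq> 0" using nz by (auto simp: B_def)
    hence "coeff (p \<alpha>) k \<noteq> 0" by (simp add: p_def coeff_sum)
    hence "p \<alpha> \<noteq> 0" by auto
    thus ?thesis using c_nz by blast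
  qed
  moreover have "\<forall>\<^sub>\<approx>z. fpoly_eval (Suc r) c (\<lambda>i. (deriv ^^ i) a z) z = 0"
    using rel
  proof eventually_elim
    case (elim z)
    let ?Y = "\<lambda>\<alpha>. \<Prod>j<Suc r. (deriv ^^ j) a z ^ \<alpha> j"
    have "fpoly_eval (Suc r) c (\<lambda>i. (deriv ^^ i) a z) z = (\<Sum>\<alpha>\<in>B. c \<alpha> z * ?Y \<alpha>)"
      unfolding fpoly_eval_def by (rule sum.mono_neutral_left[OF finB supp]) (auto simp: fun_eq_iff)
    also have "\<dots> = (\<Sum>\<alpha>\<in>B. \<Sum>k\<le>d. C (k, \<alpha>) * (z ^ k * ?Y \<alpha>))"
      by (rule sum.cong) (auto simp: c_def p_def poly_sum poly_monom sum_distrib_right mult.assoc)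
    also have "\<dots> = (\<Sum>(k, \<alpha>)\<in>{..d} \<times> B. C (k, \<alpha>) * (z ^ k * ?Y \<alpha>))"
      by (subst sum.swap) (rule sum.cartesian_product)
    finally show ?case using elim by (simp add: B_def)
  qed
  ultimately show ?thesis unfolding diff_alg_def by blast
qed

lemma diff_gens_gen_field_diff_alg:
  assumes G: "diff_gens G" and x: "x \<in> gen_field G"
  shows "diff_alg x"
proof -
  have derivs: "(deriv ^^ j) x \<in> gen_field G" for j
    using G x by (intro gen_field_higher_deriv) (auto simp: diff_gens_def)
  have fin: "finite G" using G by (simp add: diff_gens_def)
  obtain d C where
    "\<exists>ka\<in>{..d} \<times> exps_le (Suc (card G)) d. C ka \<noteq> 0"
    "\<forall>\<^sub>\<approx>z. (\<Sum>(k, \<alpha>)\<in>{..d} \<times> exps_le (Suc (card G)) d.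
      C (k, \<alpha>) * (z ^ k * (\<Prod>j<Suc (card G). (deriv ^^ j) x z ^ \<alpha> j))) = 0"
    by (rule gen_field_polynomial_relation[OF fin refl derivs])
  thus ?thesis by (rule diff_alg_if_polynomial_relation)
qed

section \<open>The functional equation\<close>

lemma diff_gens_for_equation_data:
  assumes P: "\<forall>\<alpha>. P \<alpha> \<in> L_field" and Q: "\<forall>\<alpha>. Q \<alpha> \<in> L_field"
    and b: "b meromorphic_on UNIV" "diff_alg b"
    and e: "\<forall>i\<in>{1..m}. e i holomorphic_on UNIV" "\<forall>i\<in>{1..m}. diff_alg (e i)"
      "\<forall>i\<in>{1..m}. deriv (e i) \<noteq> (\<lambda>_. 0)"
    and f: "f \<in> range P \<union> range Q \<union> insert b ((\<lambda>i z. b (e i z)) ` {1..m})"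
  shows "\<exists>G. diff_gens G \<and> f \<in> gen_field G"
proof -
  have L: "\<exists>G. diff_gens G \<and> h \<in> gen_field G" if "h \<in> L_field" for h
    using that diff_alg_imp_diff_gens by (simp add: L_field_def)
  consider \<alpha> where "f = P \<alpha>" | \<alpha> where "f = Q \<alpha>" | "f = b" | i where "i \<in> {1..m}" "f = (\<lambda>z. b (e i z))"
    using f by blast
  thus ?thesis
  proof cases
    case (4 i)
    thus ?thesis using e by (simp add: diff_alg_compose_imp_diff_gens b)
  qed (use L P Q diff_alg_imp_diff_gens[OF b] in simp_all)
qed

lemma gen_field_equation_argument:
  assumes G: "diff_gens G" and b: "b \<in> gen_field G" and be: "\<forall>i\<in>{1..m}. (\<lambda>z. b (e i z)) \<in> gen_field G"
  shows "(\<lambda>z. if k = 0 then b z else if k \<le> m then b (e k z) else (deriv ^^ (k - m)) b z) \<in> gen_field G"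
proof -
  consider "k = 0" | "k \<noteq> 0" "k \<le> m" | "\<not> k \<le> m" by linarith
  thus ?thesis
  proof cases
    case 3
    have "(deriv ^^ (k - m)) b \<in> gen_field G"
      using G b by (intro gen_field_higher_deriv) (auto simp: diff_gens_def)
    thus ?thesis using 3 by simp
  qed (use b be in simp_all)
qed

theorem theorem2p8:
  fixes a b :: "complex \<Rightarrow> complex"
    and m n :: nat
    and e :: "nat \<Rightarrow> complex \<Rightarrow> complex"
    and P Q :: "(nat \<Rightarrow> nat) \<Rightarrow> (complex \<Rightarrow> complex)"
  assumes a_trans: "diff_trans a"
    and P_poly: "fpoly (m + n + 1) P" and P_coeffs: "\<forall>\<alpha>. P \<alpha> \<in> L_field"
    and Q_poly: "fpoly (m + n + 1) Q" and Q_coeffs: "\<forall>\<alpha>. Q \<alpha> \<in> L_field"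
    and Q_nonzero: "\<exists>\<alpha>. \<not> (\<forall>\<^sub>\<approx>z. Q \<alpha> z = 0)"
    and e_entire: "\<forall>i\<in>{1..m}. e i holomorphic_on UNIV"
    and e_alg: "\<forall>i\<in>{1..m}. diff_alg (e i)"
    and e_nonconst: "\<forall>i\<in>{1..m}. deriv (e i) \<noteq> (\<lambda>_. 0)"
    and b_mero: "b meromorphic_on UNIV"
    and eq: "\<forall>\<^sub>\<approx>z.
      (let X = (\<lambda>k. if k = 0 then b z
                    else if k \<le> m then b (e k z)
                    else (deriv ^^ (k - m)) b z)
       in fpoly_eval (m + n + 1) P X z / fpoly_eval (m + n + 1) Q X z) = a z"
  shows "diff_trans b"
proof (rule ccontr)
  assume "\<not> diff_trans b"
  hence b_alg: "diff_alg b" by (simp add: diff_trans_def)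
  define F where "F = P ` {\<alpha>. P \<alpha> \<noteq> (\<lambda>_. 0)} \<union> Q ` {\<alpha>. Q \<alpha> \<noteq> (\<lambda>_. 0)} \<union>
    insert b ((\<lambda>i z. b (e i z)) ` {1..m})"
  have "finite F" using P_poly Q_poly by (simp add: F_def fpoly_def)
  moreover have "\<exists>G. diff_gens G \<and> f \<in> gen_field G" if "f \<in> F" for f
    using that unfolding F_def
    by (intro diff_gens_for_equation_data[OF P_coeffs Q_coeffs b_mero b_alg e_entire e_alg e_nonconst]) blast
  ultimately have "\<exists>G. diff_gens G \<and> F \<subseteq> gen_field G" by (intro diff_gens_common) auto
  then obtain G where G: "diff_gens G" "F \<subseteq> gen_field G" by blast
  define X where "X k = (\<lambda>z. if k = 0 then b z else if k \<le> m then b (e k z) else (deriv ^^ (k - m)) b z)"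
    for k
  have "X k \<in> gen_field G" for k
    unfolding X_def using G by (intro gen_field_equation_argument) (auto simp: F_def)
  hence "(\<lambda>z. fpoly_eval (m + n + 1) P (\<lambda>k. X k z) z / fpoly_eval (m + n + 1) Q (\<lambda>k. X k z) z)
      \<in> gen_field G"
    using G by (intro gen_field_divide fpoly_eval_gen_field) (auto simp: F_def diff_gens_def)
  hence "a \<in> gen_field G" by (rule gen_field_cong) (use eq in \<open>simp add: X_def Let_def\<close>)
  with G(1) have "diff_alg a" by (rule diff_gens_gen_field_diff_alg)
  thus False using a_trans by (simp add: diff_trans_def)
qed

end
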